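(* Let $n\ge 2$ and let $X_{a_1\cdots a_n}=X_{(a_1\cdots a_n)}$ be an affine tensor field on Minkowski spacetime $(\mathbb R^4,\eta)$, written in standard rectangular coordinates. Then $$\partial_r\partial_sX_{a_1\cdots a_n}=\frac{n(n-1)}{2}\partial_{(a_1}\partial_{a_2}X_{a_3\cdots a_n)rs},$$ with symmetrization over $a_1,\dots,a_n$ only.
   Context: Parentheses around indices denote symmetrization with weight one. A totally symmetric tensor field $X_{a_1\cdots a_n}$ on a pseudo-Riemannian manifold with Levi-Civita connection $\nabla$ is an affine tensor if $\nabla_b\nabla_{(c}X_{a_1\cdots a_n)}=0$; in rectangular coordinates on Minkowski spacetime $\nabla=\partial$. *)

theory Defs
  imports "HOL-Analysis.Analysis"
begin

text \<open>Points of Minkowski spacetime in standard rectangular coordinates: real^4.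
  Coordinate indices: elements of the numeral type 4. A rank-n tensor field is
  X :: 4 list => real^4 => real, with X as x the component X_{as} at x for length as = n.\<close>

definition pd :: "4 \<Rightarrow> (real^4 \<Rightarrow> real) \<Rightarrow> real^4 \<Rightarrow> real" where
  "pd i f x = deriv (\<lambda>t. f (x + t *\<^sub>R axis i 1)) 0"

definition partials :: "4 list \<Rightarrow> (real^4 \<Rightarrow> real) \<Rightarrow> real^4 \<Rightarrow> real" where
  "partials is f = foldr pd is f"

definition smooth_fun :: "(real^4 \<Rightarrow> real) \<Rightarrow> bool" where
  "smooth_fun f \<longleftrightarrow> (\<forall>is x. partials is f differentiable (at x))"

definition symz :: "(4 list \<Rightarrow> real) \<Rightarrow> 4 list \<Rightarrow> real" where
  "symz T l = (1 / fact (length l)) *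
     (\<Sum>p\<in>{p. p permutes {..<length l}}. T (map (\<lambda>i. l ! p i) [0..<length l]))"

definition symmetric_tensor :: "nat \<Rightarrow> (4 list \<Rightarrow> real^4 \<Rightarrow> real) \<Rightarrow> bool" where
  "symmetric_tensor n X \<longleftrightarrow>
     (\<forall>as bs. length as = n \<longrightarrow> mset as = mset bs \<longrightarrow> X as = X bs)"

text \<open>Affine tensor: \<nabla>_b \<nabla>_(c X_{a1...an)} = 0 with \<nabla> = \<partial> in rectangular coordinates.\<close>
definition affine_tensor :: "nat \<Rightarrow> (4 list \<Rightarrow> real^4 \<Rightarrow> real) \<Rightarrow> bool" where
  "affine_tensor n X \<longleftrightarrow> symmetric_tensor n X \<and>
     (\<forall>b c as x. length as = n \<longrightarrow>
        symz (\<lambda>l. pd b (pd (hd l) (X (tl l))) x) (c # as) = 0)"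

end

theory Submission
  imports Defs "HOL-Combinatorics.Permutations"
begin

(* Write D = d_r d_s X_{a_1...a_n}.  Unsymmetrizing the affine condition
   d_b d_(c X_{a_1...a_n)} = 0 gives, for every b, c and index list as,
     d_b d_c X_as + sum_i d_b d_{a_i} X_{as[i:=c]} = 0          (exchange identity).
   Applying it to (b,c) = (r,s), to (s,r), and to (a_i, s) with as[i:=r], and using
   that partial derivatives of smooth functions commute, the double sum
   G = sum_{i \<noteq> j} d_{a_i} d_{a_j} X_{as[i:=r,j:=s]} equals 2 D.  On the other hand
   the symmetrization on the right-hand side is (n-2)!/n! * G, because summing over
   all permutations a function of the first two indices counts each ordered pair
   (i,j) of distinct positions (n-2)! times. *)

lemma pd_has_real_derivative:
  fixes f :: "real^4 \<Rightarrow> real"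
  assumes "f differentiable (at (y + t *\<^sub>R axis i 1))"
  shows "((\<lambda>u. f (y + u *\<^sub>R axis i 1)) has_real_derivative pd i f (y + t *\<^sub>R axis i 1)) (at t)"
proof -
  let ?e = "axis i 1 :: real^4"
  let ?z = "y + t *\<^sub>R ?e"
  obtain f' where f': "(f has_derivative f') (at ?z)"
    using assms by (auto simp: differentiable_def)
  have line: "((\<lambda>u. f (y0 + u *\<^sub>R ?e)) has_real_derivative f' ?e) (at t0)"
    if "y0 + t0 *\<^sub>R ?e = ?z" for y0 t0
  proof -
    have line_map: "((\<lambda>u. y0 + u *\<^sub>R ?e) has_derivative (\<lambda>u. u *\<^sub>R ?e)) (at t0)"
      by (auto intro!: derivative_eq_intros)
    have "((f \<circ> (\<lambda>u. y0 + u *\<^sub>R ?e)) has_derivative (f' \<circ> (\<lambda>u. u *\<^sub>R ?e))) (at t0)"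
      using diff_chain_at[OF line_map] f' that by simp
    moreover have "f' \<circ> (\<lambda>u. u *\<^sub>R ?e) = (\<lambda>u. f' ?e * u)"
      using linear_cmul[OF has_derivative_linear[OF f']] by (auto simp: o_def mult.commute)
    ultimately show ?thesis by (simp add: has_field_derivative_def o_def)
  qed
  have "pd i f ?z = f' ?e"
    unfolding pd_def using line[of ?z 0] DERIV_imp_deriv by simp
  then show ?thesis using line[of y t] by simp
qed

(* Two applications of the mean value theorem: the second difference of f over a
   coordinate rectangle of side h equals h^2 times the mixed partial at a point
   within distance 2h of the corner x. *)
lemma second_difference_mean_value:
  fixes f :: "real^4 \<Rightarrow> real"
  assumes df: "\<And>z. f differentiable (at z)"
    and dfi: "\<And>z. pd i f differentiable (at z)"
    and h: "h > 0"
  shows "\<exists>y. dist y x < 2 * h \<and>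
     f (x + h *\<^sub>R axis j 1 + h *\<^sub>R axis i 1) - f (x + h *\<^sub>R axis i 1)
       - f (x + h *\<^sub>R axis j 1) + f x = h * h * pd j (pd i f) y"
proof -
  let ?e = "axis i 1 :: real^4" and ?d = "axis j 1 :: real^4"
  have "\<exists>\<xi>. 0 < \<xi> \<and> \<xi> < h \<and>
     (\<lambda>u. f ((x + h *\<^sub>R ?d) + u *\<^sub>R ?e) - f (x + u *\<^sub>R ?e)) h
       - (\<lambda>u. f ((x + h *\<^sub>R ?d) + u *\<^sub>R ?e) - f (x + u *\<^sub>R ?e)) 0
      = (h - 0) * (pd i f ((x + h *\<^sub>R ?d) + \<xi> *\<^sub>R ?e) - pd i f (x + \<xi> *\<^sub>R ?e))"
    by (rule MVT2[OF h]) (intro DERIV_diff pd_has_real_derivative df)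
  then obtain \<xi> where \<xi>: "0 < \<xi>" "\<xi> < h"
    and outer: "f (x + h *\<^sub>R ?d + h *\<^sub>R ?e) - f (x + h *\<^sub>R ?e) - (f (x + h *\<^sub>R ?d) - f x)
      = h * (pd i f (x + \<xi> *\<^sub>R ?e + h *\<^sub>R ?d) - pd i f (x + \<xi> *\<^sub>R ?e))"
    by (auto simp: algebra_simps)
  have "\<exists>\<eta>. 0 < \<eta> \<and> \<eta> < h \<and>
     pd i f ((x + \<xi> *\<^sub>R ?e) + h *\<^sub>R ?d) - pd i f ((x + \<xi> *\<^sub>R ?e) + 0 *\<^sub>R ?d)
      = (h - 0) * pd j (pd i f) ((x + \<xi> *\<^sub>R ?e) + \<eta> *\<^sub>R ?d)"
    by (rule MVT2[OF h]) (intro pd_has_real_derivative dfi)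
  then obtain \<eta> where \<eta>: "0 < \<eta>" "\<eta> < h"
    and inner: "pd i f (x + \<xi> *\<^sub>R ?e + h *\<^sub>R ?d) - pd i f (x + \<xi> *\<^sub>R ?e)
      = h * pd j (pd i f) (x + \<xi> *\<^sub>R ?e + \<eta> *\<^sub>R ?d)" by auto
  have "dist (x + \<xi> *\<^sub>R ?e + \<eta> *\<^sub>R ?d) x = norm (\<xi> *\<^sub>R ?e + \<eta> *\<^sub>R ?d)"
    by (simp add: dist_norm add.assoc)
  also have "\<dots> \<le> norm (\<xi> *\<^sub>R ?e) + norm (\<eta> *\<^sub>R ?d)"
    by (rule norm_triangle_ineq)
  also have "\<dots> < 2 * h" using \<xi> \<eta> by simp
  finally show ?thesis
    using outer inner by (intro exI[of _ "x + \<xi> *\<^sub>R ?e + \<eta> *\<^sub>R ?d"]) (auto simp: algebra_simps)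
qed

lemma tendsto_at_right_of_nearby_values:
  fixes g :: "'a::metric_space \<Rightarrow> 'b::metric_space" and F :: "real \<Rightarrow> 'b"
  assumes g: "isCont g x" and c: "c > 0"
    and near: "\<And>h. h > 0 \<Longrightarrow> \<exists>y. dist y x < c * h \<and> F h = g y"
  shows "(F \<longlongrightarrow> g x) (at_right 0)"
proof (rule tendstoI)
  fix \<epsilon> :: real assume "\<epsilon> > 0"
  then obtain \<delta> where \<delta>: "\<delta> > 0" "\<And>y. dist y x < \<delta> \<Longrightarrow> dist (g y) (g x) < \<epsilon>"
    using g unfolding continuous_at_eps_delta by blast
  have "dist (F h) (g x) < \<epsilon>" if "0 < h" "h < \<delta> / c" for h
  proof -
    obtain y where "dist y x < c * h" "F h = g y" using near \<open>0 < h\<close> by blast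
    moreover have "c * h < \<delta>" using that c by (simp add: field_simps)
    ultimately show ?thesis using \<delta>(2) by simp
  qed
  then show "\<forall>\<^sub>F h in at_right 0. dist (F h) (g x) < \<epsilon>"
    unfolding eventually_at_right_field using \<delta>(1) c by (intro exI[of _ "\<delta> / c"]) auto
qed

(* Schwarz's theorem: both mixed partials are the limit of the same normalized
   second difference, hence equal when they are continuous at x. *)
lemma pd_commute:
  fixes f :: "real^4 \<Rightarrow> real"
  assumes df: "\<And>z. f differentiable (at z)"
    and dfi: "\<And>z. pd i f differentiable (at z)" and dfj: "\<And>z. pd j f differentiable (at z)"
    and cji: "isCont (pd j (pd i f)) x" and cij: "isCont (pd i (pd j f)) x"
  shows "pd i (pd j f) x = pd j (pd i f) x"
proof -
  define \<Delta> where "\<Delta> h = (f (x + h *\<^sub>R axis j 1 + h *\<^sub>R axis i 1) - f (x + h *\<^sub>R axis i 1)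
       - f (x + h *\<^sub>R axis j 1) + f x) / (h * h)" for h
  have "(\<Delta> \<longlongrightarrow> pd j (pd i f) x) (at_right 0)"
  proof (rule tendsto_at_right_of_nearby_values[OF cji, of 2])
    fix h :: real assume "h > 0"
    then show "\<exists>y. dist y x < 2 * h \<and> \<Delta> h = pd j (pd i f) y"
      using second_difference_mean_value[OF df dfi, of h x j] by (auto simp: \<Delta>_def)
  qed simp
  moreover have "(\<Delta> \<longlongrightarrow> pd i (pd j f) x) (at_right 0)"
  proof (rule tendsto_at_right_of_nearby_values[OF cij, of 2])
    fix h :: real assume "h > 0"
    then show "\<exists>y. dist y x < 2 * h \<and> \<Delta> h = pd i (pd j f) y"
      using second_difference_mean_value[OF df dfj, of h x i]
      by (auto simp: \<Delta>_def algebra_simps)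
  qed simp
  ultimately show ?thesis by (rule tendsto_unique[OF trivial_limit_at_right_real, symmetric])
qed

(* Summing g (p a) over all permutations p of S: each b in S is hit by
   (|S|-1)! permutations. *)
lemma sum_permutes_at_point:
  fixes g :: "'a \<Rightarrow> 'b::{comm_semiring_1,semiring_char_0}"
  assumes fin: "finite S" and a: "a \<in> S"
  shows "(\<Sum>p\<in>{p. p permutes S}. g (p a)) = fact (card S - 1) * (\<Sum>b\<in>S. g b)"
proof -
  have S: "S = insert a (S - {a})" using a by auto
  have "(\<Sum>p\<in>{p. p permutes S}. g (p a))
      = (\<Sum>b\<in>S. \<Sum>q\<in>{q. q permutes (S - {a})}. g ((Transposition.transpose a b \<circ> q) a))"
    by (subst S, subst sum_over_permutations_insert) (use fin a in \<open>auto simp: insert_absorb\<close>)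
  also have "\<dots> = (\<Sum>b\<in>S. \<Sum>q\<in>{q. q permutes (S - {a})}. g b)"
    by (intro sum.cong refl) (auto simp: permutes_not_in)
  also have "\<dots> = (\<Sum>b\<in>S. fact (card S - 1) * g b)"
    using fin a by (simp add: card_permutations card_Diff_singleton of_nat_fact)
  finally show ?thesis by (simp add: sum_distrib_left)
qed

(* The same for a function of two distinct values p a, p c: each ordered pair of
   distinct elements of S is hit by (|S|-2)! permutations. *)
lemma sum_permutes_at_two_points:
  fixes g :: "'a \<Rightarrow> 'a \<Rightarrow> 'b::{comm_semiring_1,semiring_char_0}"
  assumes fin: "finite S" and a: "a \<in> S" and c: "c \<in> S" and ac: "a \<noteq> c"
  shows "(\<Sum>p\<in>{p. p permutes S}. g (p a) (p c))
    = fact (card S - 2) * (\<Sum>b\<in>S. \<Sum>d\<in>S - {b}. g b d)"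
proof -
  let ?\<tau> = "Transposition.transpose a"
  have S: "S = insert a (S - {a})" using a by auto
  have "(\<Sum>p\<in>{p. p permutes S}. g (p a) (p c))
      = (\<Sum>b\<in>S. \<Sum>q\<in>{q. q permutes (S - {a})}. g ((?\<tau> b \<circ> q) a) ((?\<tau> b \<circ> q) c))"
    by (subst S, subst sum_over_permutations_insert) (use fin a in \<open>auto simp: insert_absorb\<close>)
  also have "\<dots> = (\<Sum>b\<in>S. \<Sum>q\<in>{q. q permutes (S - {a})}. g b (?\<tau> b (q c)))"
    by (intro sum.cong refl) (auto simp: permutes_not_in)
  also have "\<dots> = (\<Sum>b\<in>S. fact (card S - 2) * (\<Sum>k\<in>S - {a}. g b (?\<tau> b k)))"
    using fin a c ac
    by (intro sum.cong refl, subst sum_permutes_at_point) (auto simp: card_Diff_singleton numeral_2_eq_2)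
  also have "\<dots> = (\<Sum>b\<in>S. fact (card S - 2) * (\<Sum>d\<in>S - {b}. g b d))"
  proof (rule sum.cong[OF refl])
    fix b assume "b \<in> S"
    then have "bij_betw (?\<tau> b) S S"
      using a by (simp add: bij_betw_def Transposition.transpose_image_eq)
    then have "bij_betw (?\<tau> b) (S - {a}) (S - {b})"
      using bij_betw_DiffI[OF _ _ _ _, of "?\<tau> b" S S "{a}" "{b}"] \<open>b \<in> S\<close> a
      by (simp add: bij_betw_def)
    then have "(\<Sum>k\<in>S - {a}. g b (?\<tau> b k)) = (\<Sum>d\<in>S - {b}. g b d)"
      by (rule sum.reindex_bij_betw)
    then show "fact (card S - 2) * (\<Sum>k\<in>S - {a}. g b (?\<tau> b k))
      = fact (card S - 2) * (\<Sum>d\<in>S - {b}. g b d)" by simp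
  qed
  finally show ?thesis by (simp add: sum_distrib_left)
qed

lemma mset_update_add:
  "i < length xs \<Longrightarrow> mset (xs[i := y]) + {#xs ! i#} = mset xs + {#y#}"
  by (simp add: mset_update)

lemma mset_tl_update_hd:
  assumes "k < length L"
  shows "mset (tl (L[k := hd L])) + {#L ! k#} = mset L"
proof (cases L)
  case (Cons c as)
  then show ?thesis
    using assms mset_update_add[of _ as c] by (cases k) (auto simp: add_mset_commute)
qed (use assms in simp)

lemma mset_update_two:
  assumes "i < length xs" "j < length xs" "i \<noteq> j"
  shows "mset (xs[i := y, j := z]) + {#xs ! i, xs ! j#} = mset xs + {#y, z#}"
  using mset_update_add[of j "xs[i := y]" z] mset_update_add[of i xs y] assms
  by (simp add: add_mset_commute)

lemma mset_drop_two:
  assumes "2 \<le> length l"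
  shows "mset (drop 2 l) + {#l ! 0, l ! 1#} = mset l"
proof -
  obtain a b rest where "l = a # b # rest"
    using assms by (metis One_nat_def Suc_1 Suc_le_length_iff)
  then show ?thesis by (simp add: add_mset_commute)
qed

lemma symz_hd_tl:
  fixes F :: "4 \<Rightarrow> 4 list \<Rightarrow> real"
  assumes len: "length L = Suc n"
    and inv: "\<And>a bs cs. mset bs = mset cs \<Longrightarrow> length bs = n \<Longrightarrow> F a bs = F a cs"
  shows "symz (\<lambda>l. F (hd l) (tl l)) L = (\<Sum>k<Suc n. F (L ! k) (tl (L[k := hd L]))) / real (Suc n)"
proof -
  have "(\<Sum>p\<in>{p. p permutes {..<Suc n}}. F (hd (permute_list p L)) (tl (permute_list p L)))
      = (\<Sum>p\<in>{p. p permutes {..<Suc n}}. (\<lambda>k. F (L ! k) (tl (L[k := hd L]))) (p 0))"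
  proof (rule sum.cong[OF refl])
    fix p assume "p \<in> {p. p permutes {..<Suc n}}"
    then have p: "p permutes {..<length L}" using len by simp
    let ?pl = "permute_list p L"
    have p0: "p 0 < length L" using permutes_in_image[OF p, of 0] len by simp
    have "?pl \<noteq> []" using len by (metis length_permute_list list.size(3) nat.distinct(1))
    then have hd: "hd ?pl = L ! p 0"
      using permute_list_nth[OF p, of 0] len by (simp add: hd_conv_nth)
    have "mset (tl ?pl) + {#L ! p 0#} = mset L"
      using hd len mset_permute_list[OF p] by (cases ?pl) auto
    then have "mset (tl ?pl) = mset (tl (L[p 0 := hd L]))"
      using mset_tl_update_hd[OF p0] by (metis add_right_cancel)
    then have "F (L ! p 0) (tl ?pl) = F (L ! p 0) (tl (L[p 0 := hd L]))"
      by (rule inv) (use len in simp)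
    then show "F (hd ?pl) (tl ?pl) = (\<lambda>k. F (L ! k) (tl (L[k := hd L]))) (p 0)"
      using hd by simp
  qed
  also have "\<dots> = fact n * (\<Sum>k<Suc n. F (L ! k) (tl (L[k := hd L])))"
    using sum_permutes_at_point[of "{..<Suc n}" 0] by simp
  finally have "symz (\<lambda>l. F (hd l) (tl l)) L
      = fact n / fact (Suc n) * (\<Sum>k<Suc n. F (L ! k) (tl (L[k := hd L])))"
    unfolding symz_def permute_list_def[symmetric] using len by (simp del: sum.lessThan_Suc)
  moreover have "fact n / fact (Suc n) = 1 / (real (Suc n))"
    by (simp del: of_nat_Suc)
  ultimately show ?thesis by simp
qed

lemma symz_two_leading:
  fixes F :: "4 \<Rightarrow> 4 \<Rightarrow> 4 list \<Rightarrow> real"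
  assumes len: "length as = n" and n: "2 \<le> n"
    and inv: "\<And>a b bs cs. mset bs = mset cs \<Longrightarrow> length bs = n \<Longrightarrow> F a b bs = F a b cs"
  shows "symz (\<lambda>l. F (l ! 0) (l ! 1) (drop 2 l @ [r, s])) as
    = fact (n - 2) / fact n * (\<Sum>i<n. \<Sum>j\<in>{..<n} - {i}. F (as ! i) (as ! j) (as[i := r, j := s]))"
proof -
  have "(\<Sum>p\<in>{p. p permutes {..<n}}.
          F (permute_list p as ! 0) (permute_list p as ! 1) (drop 2 (permute_list p as) @ [r, s]))
      = (\<Sum>p\<in>{p. p permutes {..<n}}. (\<lambda>i j. F (as ! i) (as ! j) (as[i := r, j := s])) (p 0) (p 1))"
  proof (rule sum.cong[OF refl])
    fix p assume "p \<in> {p. p permutes {..<n}}"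
    then have p: "p permutes {..<length as}" using len by simp
    let ?pl = "permute_list p as"
    have nth: "?pl ! 0 = as ! p 0" "?pl ! 1 = as ! p 1"
      using permute_list_nth[OF p] len n by auto
    have ij: "p 0 \<noteq> p 1" "p 0 < n" "p 1 < n"
      using permutes_inj[OF p] permutes_in_image[OF p] len n by (auto dest: injD)
    have "mset as = mset (drop 2 ?pl) + {#as ! p 0, as ! p 1#}"
      using mset_drop_two[of ?pl] nth len n mset_permute_list[OF p] by simp
    then have "mset (drop 2 ?pl @ [r, s]) + {#as ! p 0, as ! p 1#} = mset as + {#r, s#}"
      by (simp add: add_mset_commute)
    also have "\<dots> = mset (as[p 0 := r, p 1 := s]) + {#as ! p 0, as ! p 1#}"
      by (rule mset_update_two[symmetric]) (use ij len in auto)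
    finally have "mset (drop 2 ?pl @ [r, s]) = mset (as[p 0 := r, p 1 := s])" by simp
    then have "F (as ! p 0) (as ! p 1) (drop 2 ?pl @ [r, s])
        = F (as ! p 0) (as ! p 1) (as[p 0 := r, p 1 := s])"
      by (rule inv) (use len n in simp)
    then show "F (?pl ! 0) (?pl ! 1) (drop 2 ?pl @ [r, s])
        = (\<lambda>i j. F (as ! i) (as ! j) (as[i := r, j := s])) (p 0) (p 1)"
      using nth by simp
  qed
  also have "\<dots> = fact (n - 2) * (\<Sum>i<n. \<Sum>j\<in>{..<n} - {i}. F (as ! i) (as ! j) (as[i := r, j := s]))"
    using sum_permutes_at_two_points[of "{..<n}" 0 1] n by simp
  finally show ?thesis
    unfolding symz_def permute_list_def[symmetric] using len by simp
qed

lemma smooth_pd_commute: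
  assumes "smooth_fun f"
  shows "pd i (pd j f) x = pd j (pd i f) x"
proof (rule pd_commute)
  have d: "\<And>is z. partials is f differentiable (at z)"
    using assms by (simp add: smooth_fun_def)
  show "\<And>z. f differentiable (at z)" using d[of "[]"] by (simp add: partials_def)
  show "\<And>z. pd i f differentiable (at z)" using d[of "[i]"] by (simp add: partials_def)
  show "\<And>z. pd j f differentiable (at z)" using d[of "[j]"] by (simp add: partials_def)
  show "isCont (pd j (pd i f)) x"
    using differentiable_imp_continuous_within[OF d[of "[j, i]"]] by (simp add: partials_def)
  show "isCont (pd i (pd j f)) x"
    using differentiable_imp_continuous_within[OF d[of "[i, j]"]] by (simp add: partials_def)
qed

lemma symmetric_tensor_mset:
  "symmetric_tensor n X \<Longrightarrow> mset bs = mset cs \<Longrightarrow> length bs = n \<Longrightarrow> X bs = X cs"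
  by (simp add: symmetric_tensor_def)

(* The exchange identity: the affine condition with the symmetrized index c
   placed first, d_b d_c X_as + sum_i d_b d_{a_i} X_{as[i:=c]} = 0. *)
lemma affine_exchange:
  assumes aff: "affine_tensor n X" and len: "length as = n"
  shows "pd b (pd c (X as)) x + (\<Sum>i<n. pd b (pd (as ! i) (X (as[i := c]))) x) = 0"
proof -
  let ?F = "\<lambda>a l. pd b (pd a (X l)) x"
  have sym: "symmetric_tensor n X" using aff by (simp add: affine_tensor_def)
  have "symz (\<lambda>l. ?F (hd l) (tl l)) (c # as) = 0"
    using aff len by (simp add: affine_tensor_def)
  moreover have "symz (\<lambda>l. ?F (hd l) (tl l)) (c # as)
      = (\<Sum>k<Suc n. ?F ((c # as) ! k) (tl ((c # as)[k := c]))) / real (Suc n)"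
    using symz_hd_tl[of "c # as" n ?F] symmetric_tensor_mset[OF sym] len by simp
  ultimately have "(\<Sum>k<Suc n. ?F ((c # as) ! k) (tl ((c # as)[k := c]))) = 0"
    by simp
  then show ?thesis unfolding sum.lessThan_Suc_shift by simp
qed

(* Combining three exchange identities: the sum over ordered pairs (i,j) of
   distinct positions of d_{a_i} d_{a_j} X_{as[i:=r,j:=s]} is 2 d_r d_s X_as. *)
lemma affine_pair_sum:
  assumes aff: "affine_tensor n X" and smooth: "\<And>as. length as = n \<Longrightarrow> smooth_fun (X as)"
    and len: "length as = n"
  shows "(\<Sum>i<n. \<Sum>j\<in>{..<n} - {i}. pd (as ! i) (pd (as ! j) (X (as[i := r, j := s]))) x)
    = 2 * pd r (pd s (X as)) x"
proof -
  have comm: "\<And>l a b. length l = n \<Longrightarrow> pd a (pd b (X l)) x = pd b (pd a (X l)) x"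
    using smooth smooth_pd_commute by blast
  define D where "D = pd r (pd s (X as)) x"
  define P where "P i = pd r (pd (as ! i) (X (as[i := s]))) x" for i
  define Q where "Q i = pd s (pd (as ! i) (X (as[i := r]))) x" for i
  define G where "G i j = pd (as ! i) (pd (as ! j) (X (as[i := r, j := s]))) x" for i j
  have sumP: "D + (\<Sum>i<n. P i) = 0"
    using affine_exchange[OF aff len, of r s x] by (simp add: D_def P_def)
  have sumQ: "D + (\<Sum>i<n. Q i) = 0"
    using affine_exchange[OF aff len, of s r x] comm[OF len, of s r] by (simp add: D_def Q_def)
  have row: "Q i + P i + (\<Sum>j\<in>{..<n} - {i}. G i j) = 0" if i: "i < n" for i
  proof -
    let ?as = "as[i := r]"
    have "pd (as ! i) (pd s (X ?as)) x + (\<Sum>j<n. pd (as ! i) (pd (?as ! j) (X (?as[j := s]))) x) = 0"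
      using affine_exchange[OF aff, of ?as] len by simp
    moreover have "(\<Sum>j<n. pd (as ! i) (pd (?as ! j) (X (?as[j := s]))) x)
        = pd (as ! i) (pd r (X (as[i := s]))) x + (\<Sum>j\<in>{..<n} - {i}. G i j)"
      using i len by (simp add: sum.remove G_def)
    ultimately show ?thesis
      using comm[of ?as] comm[of "as[i := s]"] len by (simp add: P_def Q_def)
  qed
  have "(\<Sum>i<n. Q i + P i + (\<Sum>j\<in>{..<n} - {i}. G i j)) = 0"
    using row by simp
  then show ?thesis
    using sumP sumQ by (simp add: sum.distrib G_def D_def)
qed

lemma fact_ratio_minus_two:
  assumes "2 \<le> n"
  shows "fact (n - 2) / fact n = 1 / (real n * (real n - 1))"
proof -
  obtain m where m: "n = Suc (Suc m)" using assms by (metis add_2_eq_Suc le_Suc_ex)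
  have "(fact n :: real) = real n * (real n - 1) * fact (n - 2)"
    unfolding m by (simp add: algebra_simps)
  then show ?thesis by simp
qed

theorem mainTheorem3:
  fixes n :: nat and X :: "4 list \<Rightarrow> real^4 \<Rightarrow> real"
  assumes "n \<ge> 2"
    and "\<And>as. length as = n \<Longrightarrow> smooth_fun (X as)"
    and "affine_tensor n X"
  shows "\<And>r s as x. length as = n \<Longrightarrow>
    pd r (pd s (X as)) x =
      (real n * (real n - 1) / 2) *
        symz (\<lambda>l. pd (l ! 0) (pd (l ! 1) (X (drop 2 l @ [r, s]))) x) as"
proof -
  fix r s :: 4 and as :: "4 list" and x :: "real^4"
  assume len: "length as = n"
  have sym: "symmetric_tensor n X" using assms(3) by (simp add: affine_tensor_def)
  have "symz (\<lambda>l. pd (l ! 0) (pd (l ! 1) (X (drop 2 l @ [r, s]))) x) as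
      = fact (n - 2) / fact n
        * (\<Sum>i<n. \<Sum>j\<in>{..<n} - {i}. pd (as ! i) (pd (as ! j) (X (as[i := r, j := s]))) x)"
    using symz_two_leading[OF len assms(1), of "\<lambda>a b l. pd a (pd b (X l)) x"]
      symmetric_tensor_mset[OF sym] by simp
  also have "\<dots> = 2 * pd r (pd s (X as)) x / (real n * (real n - 1))"
    using affine_pair_sum[OF assms(3,2) len] fact_ratio_minus_two[OF assms(1)] by simp
  finally show "pd r (pd s (X as)) x =
      (real n * (real n - 1) / 2) *
        symz (\<lambda>l. pd (l ! 0) (pd (l ! 1) (X (drop 2 l @ [r, s]))) x) as"
    using assms(1) by (simp add: field_simps)
qed

end
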